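(* Let $(H,R)$ be a quasitriangular Hopf algebra and $\pi:H\to K$ a surjective Hopf algebra map. Then, identifying $\underline{H}$ with $H$ as vector spaces, $$\{h\in H\mid (\mathrm{id}\otimes\pi)\circ\underline{\Delta}(h)=h\otimes 1\}=H^{co\pi}:=\{h\in H\mid (\mathrm{id}\otimes\pi)\circ\Delta(h)=h\otimes 1\}.$$
   Context: $(H,R)$ quasitriangular means $R=\sum_iR_i\otimes R^i\in H\otimes H$ is invertible with $(\Delta\otimes\mathrm{id})(R)=R_{13}R_{23}$, $(\mathrm{id}\otimes\Delta)(R)=R_{13}R_{12}$, $\tau\Delta(h)=R\Delta(h)R^{-1}$. Sweedler notation $\Delta(h)=h_{(1)}\otimes h_{(2)}$; $\mathrm{ad}_h(a)=h_{(1)}aS(h_{(2)})$. The transmuted comultiplication on $H$ is $\underline{\Delta}(a)=\sum_i a_{(1)}S(R^i)\otimes\mathrm{ad}_{R_i}(a_{(2)})$. *)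

theory Defs
  imports Main "HOL-Library.Poly_Mapping"
begin

text \<open>
  A vector space over a field k is modelled (up to isomorphism) by its
  basis: the vector space with basis indexed by the type 'a is the type of finitely
  supported functions  'a =>0 'k.  Every vector space has a basis, so this is
  no loss of generality.  The tensor product of the spaces with bases 'a and 'b is the
  space with basis 'a \<times> 'b.  A linear map V \<rightarrow> W is given by its values on the
  basis of V, i.e. by a function  'a \<Rightarrow> ('b =>0 'k), and is applied via its
  linear extension lin_ext.
\<close>

definition smult :: "'k::field \<Rightarrow> ('a \<Rightarrow>\<^sub>0 'k) \<Rightarrow> ('a \<Rightarrow>\<^sub>0 'k)" where
  "smult c v = Poly_Mapping.map (\<lambda>x. c * x) v"

definition bvec :: "'a \<Rightarrow> ('a \<Rightarrow>\<^sub>0 'k::field)" where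
  "bvec a = Poly_Mapping.single a 1"

definition lin_ext :: "('a \<Rightarrow> ('b \<Rightarrow>\<^sub>0 'k::field)) \<Rightarrow> ('a \<Rightarrow>\<^sub>0 'k) \<Rightarrow> ('b \<Rightarrow>\<^sub>0 'k)" where
  "lin_ext f v = (\<Sum>a\<in>Poly_Mapping.keys v. smult (Poly_Mapping.lookup v a) (f a))"

definition lin_form :: "('a \<Rightarrow> 'k::field) \<Rightarrow> ('a \<Rightarrow>\<^sub>0 'k) \<Rightarrow> 'k" where
  "lin_form f v = (\<Sum>a\<in>Poly_Mapping.keys v. Poly_Mapping.lookup v a * f a)"

definition tensor :: "('a \<Rightarrow>\<^sub>0 'k::field) \<Rightarrow> ('b \<Rightarrow>\<^sub>0 'k) \<Rightarrow> ('a \<times> 'b \<Rightarrow>\<^sub>0 'k)" where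
  "tensor v w = (\<Sum>a\<in>Poly_Mapping.keys v. \<Sum>b\<in>Poly_Mapping.keys w.
                   Poly_Mapping.single (a, b) (Poly_Mapping.lookup v a * Poly_Mapping.lookup w b))"

definition tmap :: "('a \<Rightarrow> ('b \<Rightarrow>\<^sub>0 'k::field)) \<Rightarrow> ('c \<Rightarrow> ('d \<Rightarrow>\<^sub>0 'k)) \<Rightarrow> ('a \<times> 'c \<Rightarrow> ('b \<times> 'd \<Rightarrow>\<^sub>0 'k))" where
  "tmap f g = (\<lambda>(a, c). tensor (f a) (g c))"

definition idmap :: "'a \<Rightarrow> ('a \<Rightarrow>\<^sub>0 'k::field)" where
  "idmap = bvec"

definition flip :: "('a \<times> 'b \<Rightarrow>\<^sub>0 'k::field) \<Rightarrow> ('b \<times> 'a \<Rightarrow>\<^sub>0 'k)" where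
  "flip = lin_ext (\<lambda>(a, b). bvec (b, a))"

definition reassoc :: "(('a \<times> 'b) \<times> 'c \<Rightarrow>\<^sub>0 'k::field) \<Rightarrow> ('a \<times> 'b \<times> 'c \<Rightarrow>\<^sub>0 'k)" where
  "reassoc = lin_ext (\<lambda>((a, b), c). bvec (a, b, c))"

definition mul :: "('a \<times> 'a \<Rightarrow> ('a \<Rightarrow>\<^sub>0 'k::field)) \<Rightarrow> ('a \<Rightarrow>\<^sub>0 'k) \<Rightarrow> ('a \<Rightarrow>\<^sub>0 'k) \<Rightarrow> ('a \<Rightarrow>\<^sub>0 'k)" where
  "mul m x y = lin_ext m (tensor x y)"

definition tmult :: "('a \<times> 'a \<Rightarrow> ('a \<Rightarrow>\<^sub>0 'k::field)) \<Rightarrow> ('b \<times> 'b \<Rightarrow> ('b \<Rightarrow>\<^sub>0 'k))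
                      \<Rightarrow> (('a \<times> 'b) \<times> ('a \<times> 'b) \<Rightarrow> ('a \<times> 'b \<Rightarrow>\<^sub>0 'k))" where
  "tmult m1 m2 = (\<lambda>((a, b), (c, d)). tensor (m1 (a, c)) (m2 (b, d)))"

definition hopf_algebra ::
  "('a \<times> 'a \<Rightarrow> ('a \<Rightarrow>\<^sub>0 'k::field)) \<Rightarrow> ('a \<Rightarrow>\<^sub>0 'k) \<Rightarrow> ('a \<Rightarrow> ('a \<times> 'a \<Rightarrow>\<^sub>0 'k))
    \<Rightarrow> ('a \<Rightarrow> 'k) \<Rightarrow> ('a \<Rightarrow> ('a \<Rightarrow>\<^sub>0 'k)) \<Rightarrow> bool" where
  "hopf_algebra m u d e S \<longleftrightarrow>
     \<comment> \<open>associative unital algebra\<close>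
     (\<forall>x y z. mul m (mul m x y) z = mul m x (mul m y z)) \<and>
     (\<forall>x. mul m u x = x \<and> mul m x u = x) \<and>
     \<comment> \<open>coassociative counital coalgebra\<close>
     (\<forall>a. reassoc (lin_ext (tmap d idmap) (d a)) = lin_ext (tmap idmap d) (d a)) \<and>
     (\<forall>a. lin_ext (\<lambda>(x, y). smult (e x) (bvec y)) (d a) = bvec a) \<and>
     (\<forall>a. lin_ext (\<lambda>(x, y). smult (e y) (bvec x)) (d a) = bvec a) \<and>
     \<comment> \<open>comultiplication and counit are algebra maps\<close>
     (\<forall>x y. lin_ext d (mul m x y) = mul (tmult m m) (lin_ext d x) (lin_ext d y)) \<and>
     lin_ext d u = tensor u u \<and>
     (\<forall>x y. lin_form e (mul m x y) = lin_form e x * lin_form e y) \<and>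
     lin_form e u = 1 \<and>
     \<comment> \<open>antipode\<close>
     (\<forall>a. lin_ext (\<lambda>(x, y). mul m (S x) (bvec y)) (d a) = smult (e a) u) \<and>
     (\<forall>a. lin_ext (\<lambda>(x, y). mul m (bvec x) (S y)) (d a) = smult (e a) u)"

text \<open>Hopf algebra map (= bialgebra map) \<pi> : H \<rightarrow> K\<close>
definition hopf_map ::
  "('a \<times> 'a \<Rightarrow> ('a \<Rightarrow>\<^sub>0 'k::field)) \<Rightarrow> ('a \<Rightarrow>\<^sub>0 'k) \<Rightarrow> ('a \<Rightarrow> ('a \<times> 'a \<Rightarrow>\<^sub>0 'k)) \<Rightarrow> ('a \<Rightarrow> 'k)
   \<Rightarrow> ('c \<times> 'c \<Rightarrow> ('c \<Rightarrow>\<^sub>0 'k)) \<Rightarrow> ('c \<Rightarrow>\<^sub>0 'k) \<Rightarrow> ('c \<Rightarrow> ('c \<times> 'c \<Rightarrow>\<^sub>0 'k)) \<Rightarrow> ('c \<Rightarrow> 'k)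
   \<Rightarrow> ('a \<Rightarrow> ('c \<Rightarrow>\<^sub>0 'k)) \<Rightarrow> bool" where
  "hopf_map mH uH dH eH mK uK dK eK p \<longleftrightarrow>
     (\<forall>x y. lin_ext p (mul mH x y) = mul mK (lin_ext p x) (lin_ext p y)) \<and>
     lin_ext p uH = uK \<and>
     (\<forall>a. lin_ext dK (p a) = lin_ext (tmap p p) (dH a)) \<and>
     (\<forall>a. lin_form eK (p a) = eH a)"

definition leg12 :: "('a \<Rightarrow>\<^sub>0 'k::field) \<Rightarrow> ('a \<times> 'a \<Rightarrow>\<^sub>0 'k) \<Rightarrow> ('a \<times> 'a \<times> 'a \<Rightarrow>\<^sub>0 'k)" where
  "leg12 u R = lin_ext (\<lambda>(a, b). tensor (bvec a) (tensor (bvec b) u)) R"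
definition leg13 :: "('a \<Rightarrow>\<^sub>0 'k::field) \<Rightarrow> ('a \<times> 'a \<Rightarrow>\<^sub>0 'k) \<Rightarrow> ('a \<times> 'a \<times> 'a \<Rightarrow>\<^sub>0 'k)" where
  "leg13 u R = lin_ext (\<lambda>(a, b). tensor (bvec a) (tensor u (bvec b))) R"
definition leg23 :: "('a \<Rightarrow>\<^sub>0 'k::field) \<Rightarrow> ('a \<times> 'a \<Rightarrow>\<^sub>0 'k) \<Rightarrow> ('a \<times> 'a \<times> 'a \<Rightarrow>\<^sub>0 'k)" where
  "leg23 u R = tensor u R"

definition quasitriangular ::
  "('a \<times> 'a \<Rightarrow> ('a \<Rightarrow>\<^sub>0 'k::field)) \<Rightarrow> ('a \<Rightarrow>\<^sub>0 'k) \<Rightarrow> ('a \<Rightarrow> ('a \<times> 'a \<Rightarrow>\<^sub>0 'k))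
    \<Rightarrow> ('a \<Rightarrow> 'k) \<Rightarrow> ('a \<Rightarrow> ('a \<Rightarrow>\<^sub>0 'k)) \<Rightarrow> ('a \<times> 'a \<Rightarrow>\<^sub>0 'k) \<Rightarrow> bool" where
  "quasitriangular m u d e S R \<longleftrightarrow>
     hopf_algebra m u d e S \<and>
     (\<exists>Rinv. mul (tmult m m) R Rinv = tensor u u \<and> mul (tmult m m) Rinv R = tensor u u \<and>
        (\<forall>h. flip (lin_ext d h) = mul (tmult m m) (mul (tmult m m) R (lin_ext d h)) Rinv)) \<and>
     reassoc (lin_ext (tmap d idmap) R) = mul (tmult m (tmult m m)) (leg13 u R) (leg23 u R) \<and>
     lin_ext (tmap idmap d) R = mul (tmult m (tmult m m)) (leg13 u R) (leg12 u R)"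

definition ad ::
  "('a \<times> 'a \<Rightarrow> ('a \<Rightarrow>\<^sub>0 'k::field)) \<Rightarrow> ('a \<Rightarrow> ('a \<times> 'a \<Rightarrow>\<^sub>0 'k)) \<Rightarrow> ('a \<Rightarrow> ('a \<Rightarrow>\<^sub>0 'k))
    \<Rightarrow> ('a \<Rightarrow>\<^sub>0 'k) \<Rightarrow> ('a \<Rightarrow>\<^sub>0 'k) \<Rightarrow> ('a \<Rightarrow>\<^sub>0 'k)" where
  "ad m d S h a = lin_ext (\<lambda>(x, y). mul m (mul m (bvec x) a) (lin_ext S (bvec y))) (lin_ext d h)"

text \<open>transmuted comultiplication
  \<Delta>_(a) = \<Sum>_i a_(1) S(R^i) \<otimes> ad_{R_i}(a_(2)),  where R = \<Sum>_i R_i \<otimes> R^i\<close>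
definition transmuted_comult ::
  "('a \<times> 'a \<Rightarrow> ('a \<Rightarrow>\<^sub>0 'k::field)) \<Rightarrow> ('a \<Rightarrow> ('a \<times> 'a \<Rightarrow>\<^sub>0 'k)) \<Rightarrow> ('a \<Rightarrow> ('a \<Rightarrow>\<^sub>0 'k))
    \<Rightarrow> ('a \<times> 'a \<Rightarrow>\<^sub>0 'k) \<Rightarrow> ('a \<Rightarrow>\<^sub>0 'k) \<Rightarrow> ('a \<times> 'a \<Rightarrow>\<^sub>0 'k)" where
  "transmuted_comult m d S R a =
     lin_ext (\<lambda>(r1, r2).
        lin_ext (\<lambda>(x, y). tensor (mul m (bvec x) (lin_ext S (bvec r2))) (ad m d S (bvec r1) (bvec y)))
                (lin_ext d a)) R"

end

theory Submission
  imports Defs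
begin

text \<open>
  Push the adjoint action of \<open>H\<close> through \<open>\<pi>\<close>: \<open>adK h k = \<pi>(h\<^sub>1) k \<pi>(S h\<^sub>2)\<close>.
  As \<open>S\<close> is an anti-algebra map and \<open>\<pi>\<close> an algebra map, this is an action of \<open>H\<close> on \<open>K\<close>
  with \<open>adK h 1 = \<epsilon>(h) 1\<close>. For \<open>Q \<in> H \<otimes> H\<close> let
  \<open>twist Q (x \<otimes> k) = \<Sum>\<^sub>i x S(Q\<^sup>i) \<otimes> adK Q\<^sub>i k\<close>. Then
  \<open>(id \<otimes> \<pi>) \<Delta>_ = twist R \<circ> (id \<otimes> \<pi>) \<Delta>\<close>, and \<open>twist P \<circ> twist Q = id\<close> whenever
  \<open>PQ = 1 \<otimes> 1\<close>. The axiom \<open>(\<Delta> \<otimes> id) R = R\<^sub>1\<^sub>3 R\<^sub>2\<^sub>3\<close> gives \<open>(\<epsilon> \<otimes> id) R = 1\<close>,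
  hence \<open>(\<epsilon> \<otimes> id) R\<^sup>-\<^sup>1 = 1\<close>, so \<open>twist R\<close> and \<open>twist R\<^sup>-\<^sup>1\<close> both fix every
  \<open>x \<otimes> 1\<close>. Hence \<open>twist R X = h \<otimes> 1\<close> if and only if \<open>X = h \<otimes> 1\<close>.
\<close>

section \<open>Linear maps between spaces of finitely supported functions\<close>

lemma lookup_smult [simp]: "Poly_Mapping.lookup (smult c v) a = c * Poly_Mapping.lookup v a"
  unfolding smult_def by transfer (simp add: when_def)

lemma lookup_bvec: "Poly_Mapping.lookup (bvec a) b = (if a = b then 1 else 0)"
  unfolding bvec_def by (simp add: lookup_single)

lemma keys_bvec [simp]: "Poly_Mapping.keys (bvec a :: _ \<Rightarrow>\<^sub>0 'k::field) = {a}"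
  unfolding bvec_def by simp

lemma smult_zero [simp]: "smult 0 v = 0" "smult c 0 = 0"
  by (rule poly_mapping_eqI, simp)+

lemma smult_add_right: "smult a (v + w) = smult a v + smult a w"
  by (rule poly_mapping_eqI) (simp add: lookup_add distrib_left)

lemma smult_smult [simp]: "smult a (smult b v) = smult (a * b) v"
  by (rule poly_mapping_eqI) simp

lemma smult_one [simp]: "smult 1 v = v"
  by (rule poly_mapping_eqI) simp

lemma lookup_lin_ext:
  "Poly_Mapping.lookup (lin_ext f v) b
     = (\<Sum>a\<in>Poly_Mapping.keys v. Poly_Mapping.lookup v a * Poly_Mapping.lookup (f a) b)"
  unfolding lin_ext_def by (simp add: lookup_sum)

lemma lookup_lin_ext_superset:
  assumes "finite A" "Poly_Mapping.keys v \<subseteq> A"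
  shows "Poly_Mapping.lookup (lin_ext f v) b
           = (\<Sum>a\<in>A. Poly_Mapping.lookup v a * Poly_Mapping.lookup (f a) b)"
  unfolding lookup_lin_ext
  by (rule sum.mono_neutral_left) (use assms in \<open>auto simp: in_keys_iff\<close>)

lemma lin_ext_add: "lin_ext f (v + w) = lin_ext f v + lin_ext f w"
proof (rule poly_mapping_eqI)
  fix b
  let ?A = "Poly_Mapping.keys v \<union> Poly_Mapping.keys w"
  have "finite ?A" by simp
  then have "Poly_Mapping.lookup (lin_ext f x) b
               = (\<Sum>a\<in>?A. Poly_Mapping.lookup x a * Poly_Mapping.lookup (f a) b)"
    if "x \<in> {v, w, v + w}" for x
    by (rule lookup_lin_ext_superset) (use that keys_add[of v w] in auto)
  then show "Poly_Mapping.lookup (lin_ext f (v + w)) b = Poly_Mapping.lookup (lin_ext f v + lin_ext f w) b"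
    by (simp add: lookup_add distrib_right sum.distrib)
qed

lemma lin_ext_smult: "lin_ext f (smult c v) = smult c (lin_ext f v)"
proof (rule poly_mapping_eqI)
  fix b
  have "Poly_Mapping.lookup (lin_ext f (smult c v)) b
          = (\<Sum>a\<in>Poly_Mapping.keys v. Poly_Mapping.lookup (smult c v) a * Poly_Mapping.lookup (f a) b)"
    by (rule lookup_lin_ext_superset) (auto simp: in_keys_iff)
  then show "Poly_Mapping.lookup (lin_ext f (smult c v)) b = Poly_Mapping.lookup (smult c (lin_ext f v)) b"
    by (simp add: lookup_lin_ext sum_distrib_left mult.assoc)
qed

lemma lin_ext_bvec [simp]: "lin_ext f (bvec a) = f a"
  by (rule poly_mapping_eqI) (simp add: lookup_lin_ext lookup_bvec)

lemma lin_ext_bvec_self [simp]: "lin_ext bvec v = v"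
  by (rule poly_mapping_eqI) (simp add: lookup_lin_ext lookup_bvec in_keys_iff if_distrib cong: if_cong)

lemma lin_ext_idmap [simp]: "lin_ext idmap v = v"
  by (simp add: idmap_def)

lemma lin_ext_cong: "(\<And>a. a \<in> Poly_Mapping.keys v \<Longrightarrow> f a = g a) \<Longrightarrow> lin_ext f v = lin_ext g v"
  unfolding lin_ext_def by simp

lemma lin_ext_fun_add: "lin_ext (\<lambda>a. f a + g a) v = lin_ext f v + lin_ext g v"
  unfolding lin_ext_def by (simp add: smult_add_right sum.distrib)

lemma lin_ext_fun_smult: "lin_ext (\<lambda>a. smult c (f a)) v = smult c (lin_ext f v)"
  by (rule poly_mapping_eqI) (simp add: lookup_lin_ext sum_distrib_left mult_ac)

lemma lin_ext_scalar: "lin_ext (\<lambda>a. smult (f a) w) v = smult (lin_form f v) w"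
  unfolding lin_ext_def lin_form_def by (rule poly_mapping_eqI) (simp add: lookup_sum sum_distrib_right)

lemma lin_form_bvec [simp]: "lin_form f (bvec a) = f a"
  unfolding lin_form_def by (simp add: lookup_bvec)

lemma lin_ext_swap:
  "lin_ext (\<lambda>a. lin_ext (\<lambda>b. F a b) w) v = lin_ext (\<lambda>b. lin_ext (\<lambda>a. F a b) v) w"
  by (rule poly_mapping_eqI)
     (simp add: lookup_lin_ext sum_distrib_left sum_distrib_right mult_ac sum.swap[of _ "Poly_Mapping.keys v"])

lemma lin_ext_swap_pairs:
  "lin_ext (\<lambda>(a1, a2). lin_ext (\<lambda>(b1, b2). F a1 a2 b1 b2) w) v
     = lin_ext (\<lambda>(b1, b2). lin_ext (\<lambda>(a1, a2). F a1 a2 b1 b2) v) w"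
  using lin_ext_swap[of "\<lambda>a b. F (fst a) (snd a) (fst b) (snd b)" w v] by (simp add: split_def)

definition linear_map :: "(('a \<Rightarrow>\<^sub>0 'k::field) \<Rightarrow> ('b \<Rightarrow>\<^sub>0 'k)) \<Rightarrow> bool" where
  "linear_map L \<longleftrightarrow> (\<forall>x y. L (x + y) = L x + L y) \<and> (\<forall>c x. L (smult c x) = smult c (L x))"

lemma linear_map_zero: "linear_map L \<Longrightarrow> L 0 = 0"
  unfolding linear_map_def by (metis smult_zero)

lemma linear_map_sum: "linear_map L \<Longrightarrow> L (sum f A) = (\<Sum>a\<in>A. L (f a))"
  by (induction A rule: infinite_finite_induct) (auto simp: linear_map_zero linear_map_def)

lemma linear_map_smultD: "linear_map L \<Longrightarrow> L (smult c x) = smult c (L x)"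
  unfolding linear_map_def by blast

lemma linear_map_lin_ext [simp]: "linear_map (lin_ext f)"
  unfolding linear_map_def by (simp add: lin_ext_add lin_ext_smult)

lemma linear_map_eq_lin_ext:
  assumes "linear_map L"
  shows "L v = lin_ext (\<lambda>a. L (bvec a)) v"
proof -
  have "L v = L (\<Sum>a\<in>Poly_Mapping.keys v. smult (Poly_Mapping.lookup v a) (bvec a))"
    using lin_ext_bvec_self[of v] by (simp only: lin_ext_def)
  also have "\<dots> = lin_ext (\<lambda>a. L (bvec a)) v"
    by (simp add: linear_map_sum[OF assms] linear_map_smultD[OF assms] lin_ext_def)
  finally show ?thesis .
qed

lemma linear_map_eqI:
  assumes "linear_map F" "linear_map G" "\<And>a. F (bvec a) = G (bvec a)"
  shows "F v = G v"
proof -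
  have "F v = lin_ext (\<lambda>a. F (bvec a)) v" by (rule linear_map_eq_lin_ext[OF assms(1)])
  also have "\<dots> = G v" by (simp only: assms(3) linear_map_eq_lin_ext[OF assms(2), symmetric])
  finally show ?thesis .
qed

lemma lin_ext_linear_map: "linear_map L \<Longrightarrow> lin_ext (\<lambda>a. L (f a)) v = L (lin_ext f v)"
  by (rule linear_map_eqI) (auto simp: linear_map_def lin_ext_fun_add lin_ext_fun_smult lin_ext_add lin_ext_smult)

lemma lin_ext_linear_map_pair:
  "linear_map L \<Longrightarrow> lin_ext (\<lambda>(x, y). L (g x y)) v = L (lin_ext (\<lambda>(x, y). g x y) v)"
  using lin_ext_linear_map[of L "\<lambda>(x, y). g x y" v] by (simp add: case_prod_beta')

lemma lin_ext_lin_ext: "lin_ext g (lin_ext f v) = lin_ext (\<lambda>a. lin_ext g (f a)) v"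
  by (rule lin_ext_linear_map[symmetric]) simp

lemma linear_map_id: "linear_map (\<lambda>x. x)"
  unfolding linear_map_def by simp

lemma linear_map_comp: "linear_map F \<Longrightarrow> linear_map G \<Longrightarrow> linear_map (\<lambda>x. F (G x))"
  unfolding linear_map_def by simp

lemma linear_map_smult_comp: "linear_map L \<Longrightarrow> linear_map (\<lambda>x. smult c (L x))"
  unfolding linear_map_def by (simp add: smult_add_right mult.commute)

lemma linear_map_lin_ext_comp: "linear_map L \<Longrightarrow> linear_map (\<lambda>x. lin_ext f (L x))"
  by (rule linear_map_comp[OF linear_map_lin_ext])

lemma linear_map_lin_ext_fun: "(\<And>a. linear_map (L a)) \<Longrightarrow> linear_map (\<lambda>x. lin_ext (\<lambda>a. L a x) v)"
  unfolding linear_map_def by (simp add: lin_ext_fun_add lin_ext_fun_smult)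

lemma linear_map_lin_ext_fun_pair:
  "(\<And>a b. linear_map (L a b)) \<Longrightarrow> linear_map (\<lambda>x. lin_ext (\<lambda>(a, b). L a b x) v)"
  using linear_map_lin_ext_fun[of "\<lambda>c. L (fst c) (snd c)" v] by (simp add: split_def)

section \<open>Tensor products and multiplication maps\<close>

lemma tensor_eq_lin_ext: "tensor v w = lin_ext (\<lambda>a. lin_ext (\<lambda>b. bvec (a, b)) w) v"
  by (rule poly_mapping_eqI)
     (simp add: tensor_def lookup_lin_ext lookup_sum lookup_single lookup_bvec when_def
        sum_distrib_left if_distrib cong: if_cong)

lemma tensor_bvec [simp]: "tensor (bvec a) (bvec b) = bvec (a, b)"
  unfolding tensor_eq_lin_ext by simp

lemma linear_map_tensor_left: "linear_map L \<Longrightarrow> linear_map (\<lambda>x. tensor (L x) w)"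
  unfolding tensor_eq_lin_ext by (rule linear_map_lin_ext_comp)

lemma linear_map_tensor_right: "linear_map L \<Longrightarrow> linear_map (\<lambda>x. tensor v (L x))"
  unfolding tensor_eq_lin_ext
  by (rule linear_map_comp[OF linear_map_lin_ext_fun]) simp_all

lemma linear_map_mul_left: "linear_map L \<Longrightarrow> linear_map (\<lambda>x. mul m (L x) y)"
  unfolding mul_def by (intro linear_map_lin_ext_comp linear_map_tensor_left)

lemma linear_map_mul_right: "linear_map L \<Longrightarrow> linear_map (\<lambda>x. mul m y (L x))"
  unfolding mul_def by (intro linear_map_lin_ext_comp linear_map_tensor_right)

lemmas linear_map_intros = linear_map_tensor_left linear_map_tensor_right linear_map_lin_ext_comp
  linear_map_mul_left linear_map_mul_right linear_map_smult_comp linear_map_lin_ext_fun linear_map_id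

lemma tensor_smult_left: "tensor (smult c x) y = smult c (tensor x y)"
  by (rule linear_map_smultD) (intro linear_map_intros)

lemma tensor_smult_right: "tensor x (smult c y) = smult c (tensor x y)"
  by (rule linear_map_smultD) (intro linear_map_intros)

lemma mul_smult_left: "mul m (smult c x) y = smult c (mul m x y)"
  by (rule linear_map_smultD) (intro linear_map_intros)

lemma mul_smult_right: "mul m x (smult c y) = smult c (mul m x y)"
  by (rule linear_map_smultD) (intro linear_map_intros)

lemma bilinear_eqI:
  assumes "\<And>w. linear_map (\<lambda>v. P v w)" "\<And>v. linear_map (\<lambda>w. P v w)"
    and "\<And>w. linear_map (\<lambda>v. Q v w)" "\<And>v. linear_map (\<lambda>w. Q v w)"
    and "\<And>a b. P (bvec a) (bvec b) = Q (bvec a) (bvec b)"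
  shows "P v w = Q v w"
proof -
  have on_basis: "P (bvec a) w = Q (bvec a) w" for a
    by (rule linear_map_eqI[where F="\<lambda>w. P (bvec a) w"]) (use assms in auto)
  show ?thesis
    by (rule linear_map_eqI[where F="\<lambda>v. P v w"]) (use assms on_basis in auto)
qed

lemma lin_ext_tensor: "lin_ext f (tensor v w) = lin_ext (\<lambda>a. lin_ext (\<lambda>b. f (a, b)) w) v"
  unfolding tensor_eq_lin_ext lin_ext_lin_ext by simp

lemma lin_ext_tensor_bvec_left: "lin_ext f (tensor (bvec a) w) = lin_ext (\<lambda>b. f (a, b)) w"
  by (simp add: lin_ext_tensor)

lemma lin_ext_tensor_bvec_right: "lin_ext f (tensor v (bvec b)) = lin_ext (\<lambda>a. f (a, b)) v"
  by (simp add: lin_ext_tensor)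

lemma lin_ext_tensor_bilinear:
  assumes "\<And>w. linear_map (\<lambda>v. B v w)" "\<And>v. linear_map (\<lambda>w. B v w)"
  shows "lin_ext (\<lambda>(a, b). B (bvec a) (bvec b)) (tensor v w) = B v w"
  by (rule bilinear_eqI[where P="\<lambda>v w. lin_ext (\<lambda>(a, b). B (bvec a) (bvec b)) (tensor v w)"])
     (use assms in \<open>auto intro!: linear_map_intros\<close>)

lemma tmap_tensor: "lin_ext (tmap f g) (tensor v w) = tensor (lin_ext f v) (lin_ext g w)"
  by (rule bilinear_eqI[where P="\<lambda>v w. lin_ext (tmap f g) (tensor v w)"])
     (auto intro!: linear_map_intros simp: tmap_def)

lemma mul_bvec [simp]: "mul m (bvec a) (bvec b) = m (a, b)"
  unfolding mul_def by simp

lemma mul_eq_lin_ext: "mul m x y = lin_ext (\<lambda>a. lin_ext (\<lambda>b. m (a, b)) y) x"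
  unfolding mul_def lin_ext_tensor ..

lemma tmult_tensor: "mul (tmult m1 m2) (tensor a b) (tensor c d) = tensor (mul m1 a c) (mul m2 b d)"
proof -
  have on_basis: "mul (tmult m1 m2) (tensor a b) (tensor (bvec x) (bvec y))
                   = tensor (mul m1 a (bvec x)) (mul m2 b (bvec y))" for x y
    by (rule bilinear_eqI[where P="\<lambda>a b. mul (tmult m1 m2) (tensor a b) (tensor (bvec x) (bvec y))"])
       (auto intro!: linear_map_intros simp: tmult_def)
  show ?thesis
    by (rule bilinear_eqI[where P="\<lambda>c d. mul (tmult m1 m2) (tensor a b) (tensor c d)"])
       (auto intro!: linear_map_intros simp only: on_basis)
qed

lemma lin_ext_mul_tmult:
  "lin_ext F (mul (tmult m1 m2) X Y)
     = lin_ext (\<lambda>(a1, a2). lin_ext (\<lambda>(b1, b2). lin_ext F (tensor (m1 (a1, b1)) (m2 (a2, b2)))) Y) X"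
  unfolding mul_eq_lin_ext lin_ext_lin_ext
  by (intro lin_ext_cong) (auto simp: tmult_def intro!: lin_ext_cong)

section \<open>Hopf algebras: counit and antipode\<close>

locale hopf =
  fixes m :: "'a \<times> 'a \<Rightarrow> ('a \<Rightarrow>\<^sub>0 'k::field)" and u :: "'a \<Rightarrow>\<^sub>0 'k"
    and d :: "'a \<Rightarrow> ('a \<times> 'a \<Rightarrow>\<^sub>0 'k)" and e :: "'a \<Rightarrow> 'k" and S :: "'a \<Rightarrow> ('a \<Rightarrow>\<^sub>0 'k)"
  assumes is_hopf_algebra: "hopf_algebra m u d e S"
begin

lemma mul_assoc: "mul m (mul m x y) z = mul m x (mul m y z)"
  using is_hopf_algebra unfolding hopf_algebra_def by blast

lemma mul_unit_left [simp]: "mul m u x = x"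
  using is_hopf_algebra unfolding hopf_algebra_def by blast

lemma mul_unit_right [simp]: "mul m x u = x"
  using is_hopf_algebra unfolding hopf_algebra_def by blast

lemma coassoc: "reassoc (lin_ext (tmap d idmap) (d a)) = lin_ext (tmap idmap d) (d a)"
  using is_hopf_algebra unfolding hopf_algebra_def by blast

lemma counit_left_basis: "lin_ext (\<lambda>(x, y). smult (e x) (bvec y)) (d a) = bvec a"
  using is_hopf_algebra unfolding hopf_algebra_def by blast

lemma counit_right_basis: "lin_ext (\<lambda>(x, y). smult (e y) (bvec x)) (d a) = bvec a"
  using is_hopf_algebra unfolding hopf_algebra_def by blast

lemma comult_mul: "lin_ext d (mul m x y) = mul (tmult m m) (lin_ext d x) (lin_ext d y)"
  using is_hopf_algebra unfolding hopf_algebra_def by blast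

lemma comult_unit: "lin_ext d u = tensor u u"
  using is_hopf_algebra unfolding hopf_algebra_def by blast

lemma counit_mul: "lin_form e (mul m x y) = lin_form e x * lin_form e y"
  using is_hopf_algebra unfolding hopf_algebra_def by blast

lemma counit_unit: "lin_form e u = 1"
  using is_hopf_algebra unfolding hopf_algebra_def by blast

lemma antipode_left_basis: "lin_ext (\<lambda>(x, y). mul m (S x) (bvec y)) (d a) = smult (e a) u"
  using is_hopf_algebra unfolding hopf_algebra_def by blast

lemma antipode_right_basis: "lin_ext (\<lambda>(x, y). mul m (bvec x) (S y)) (d a) = smult (e a) u"
  using is_hopf_algebra unfolding hopf_algebra_def by blast

lemma counit_m: "lin_form e (m (a, b)) = e a * e b"
  using counit_mul[of "bvec a" "bvec b"] by simp

lemma counit_left: "lin_ext (\<lambda>(x, y). smult (e x) (f y)) (d a) = f a"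
proof -
  have "lin_ext (\<lambda>(x, y). smult (e x) (f y)) (d a)
          = lin_ext (\<lambda>(x, y). lin_ext f (smult (e x) (bvec y))) (d a)"
    by (simp add: lin_ext_smult)
  also have "\<dots> = lin_ext f (lin_ext (\<lambda>(x, y). smult (e x) (bvec y)) (d a))"
    by (rule lin_ext_linear_map_pair) simp
  finally show ?thesis by (simp add: counit_left_basis)
qed

lemma counit_right: "lin_ext (\<lambda>(x, y). smult (e y) (f x)) (d a) = f a"
proof -
  have "lin_ext (\<lambda>(x, y). smult (e y) (f x)) (d a)
          = lin_ext (\<lambda>(x, y). lin_ext f (smult (e y) (bvec x))) (d a)"
    by (simp add: lin_ext_smult)
  also have "\<dots> = lin_ext f (lin_ext (\<lambda>(x, y). smult (e y) (bvec x)) (d a))"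
    by (rule lin_ext_linear_map_pair) simp
  finally show ?thesis by (simp add: counit_right_basis)
qed

lemma antipode_left: "lin_ext (\<lambda>(x, y). mul m (S x) (bvec y)) (lin_ext d g) = smult (lin_form e g) u"
  by (simp add: lin_ext_lin_ext antipode_left_basis lin_ext_scalar)

lemma antipode_right_inside:
  "lin_ext (\<lambda>(x, y). mul m (mul m A (bvec x)) (mul m (S y) B)) (d c) = smult (e c) (mul m A B)"
proof -
  have "lin_ext (\<lambda>(x, y). mul m (mul m A (bvec x)) (mul m (S y) B)) (d c)
          = lin_ext (\<lambda>(x, y). mul m A (mul m (mul m (bvec x) (S y)) B)) (d c)"
    by (simp add: mul_assoc)
  also have "\<dots> = mul m A (mul m (lin_ext (\<lambda>(x, y). mul m (bvec x) (S y)) (d c)) B)"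
    by (rule lin_ext_linear_map_pair) (intro linear_map_intros)
  finally show ?thesis by (simp add: antipode_right_basis mul_smult_left mul_smult_right)
qed

lemma lin_ext_comult_id_comult:
  "lin_ext g (lin_ext (tmap idmap d) (d a)) = lin_ext (\<lambda>(x, y). lin_ext (\<lambda>c. g (x, c)) (d y)) (d a)"
  unfolding lin_ext_lin_ext
  by (intro lin_ext_cong) (clarsimp simp: tmap_def idmap_def lin_ext_tensor_bvec_left)

lemma lin_ext_reassoc: "lin_ext g (reassoc W) = lin_ext (\<lambda>((p, q), r). g (p, q, r)) W"
  unfolding reassoc_def lin_ext_lin_ext by (intro lin_ext_cong) auto

lemma lin_ext_comult_comult_id:
  "lin_ext g (lin_ext (tmap idmap d) (d a)) = lin_ext (\<lambda>(x, y). lin_ext (\<lambda>(p, q). g (p, q, y)) (d x)) (d a)"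
  unfolding coassoc[symmetric] lin_ext_reassoc lin_ext_lin_ext
  by (intro lin_ext_cong) (auto simp: tmap_def idmap_def lin_ext_tensor_bvec_right intro!: lin_ext_cong)

text \<open>
  Both \<open>S(ab)\<close> and \<open>S(b) S(a)\<close> equal
  \<open>S(a\<^sub>1 b\<^sub>1) a\<^sub>2 b\<^sub>2 S(b\<^sub>3) S(a\<^sub>3)\<close>: contract \<open>a\<^sub>2 b\<^sub>2 S(b\<^sub>3) S(a\<^sub>3)\<close> with the right
  antipode axiom, or \<open>S(a\<^sub>1 b\<^sub>1) a\<^sub>2 b\<^sub>2 = S((ab)\<^sub>1) (ab)\<^sub>2\<close> with the left one.
\<close>

definition antipode_sandwich :: "'a \<Rightarrow> 'a \<Rightarrow> 'a \<Rightarrow> 'a \<Rightarrow> 'a \<Rightarrow> 'a \<Rightarrow> ('a \<Rightarrow>\<^sub>0 'k)" where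
  "antipode_sandwich a1 a2 a3 b1 b2 b3
     = mul m (mul m (lin_ext S (m (a1, b1))) (m (a2, b2))) (mul m (S b3) (S a3))"

abbreviation sandwich_sum :: "'a \<Rightarrow> 'a \<Rightarrow> ('a \<Rightarrow>\<^sub>0 'k)" where
  "sandwich_sum a b \<equiv>
     lin_ext (\<lambda>(a1, a2, a3). lin_ext (\<lambda>(b1, b2, b3). antipode_sandwich a1 a2 a3 b1 b2 b3)
       (lin_ext (tmap idmap d) (d b))) (lin_ext (tmap idmap d) (d a))"

lemma lin_ext_mul_antipode_tensor:
  "lin_ext (\<lambda>(p, q). mul m (S p) (bvec q)) (tensor v w) = mul m (lin_ext S v) w"
  using lin_ext_tensor_bilinear[where B="\<lambda>v w. mul m (lin_ext S v) w"]
  by (simp add: linear_map_intros)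

lemma sandwich_contract_left:
  "lin_ext (\<lambda>(a1, a2). lin_ext (\<lambda>(b1, b2). antipode_sandwich a1 a2 a3 b1 b2 b3) (d y)) (d x)
     = smult (e x * e y) (mul m (S b3) (S a3))"
proof -
  let ?C = "mul m (S b3) (S a3)"
  have "lin_ext (\<lambda>(a1, a2). lin_ext (\<lambda>(b1, b2). antipode_sandwich a1 a2 a3 b1 b2 b3) (d y)) (d x)
     = lin_ext (\<lambda>(a1, a2). mul m (lin_ext (\<lambda>(b1, b2). mul m (lin_ext S (m (a1, b1))) (m (a2, b2))) (d y)) ?C) (d x)"
    unfolding antipode_sandwich_def
    by (subst lin_ext_linear_map_pair[where L="\<lambda>z. mul m z ?C"]) (intro linear_map_intros, rule refl)
  also have "\<dots> = mul m (lin_ext (\<lambda>(a1, a2). lin_ext (\<lambda>(b1, b2).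
                     mul m (lin_ext S (m (a1, b1))) (m (a2, b2))) (d y)) (d x)) ?C"
    by (rule lin_ext_linear_map_pair) (intro linear_map_intros)
  also have "lin_ext (\<lambda>(a1, a2). lin_ext (\<lambda>(b1, b2). mul m (lin_ext S (m (a1, b1))) (m (a2, b2))) (d y)) (d x)
     = lin_ext (\<lambda>(p, q). mul m (S p) (bvec q)) (mul (tmult m m) (d x) (d y))"
    unfolding lin_ext_mul_tmult lin_ext_mul_antipode_tensor ..
  also have "\<dots> = smult (e x * e y) u"
    using comult_mul[of "bvec x" "bvec y"] antipode_left[of "m (x, y)"] by (simp add: counit_m)
  finally show ?thesis by (simp add: mul_smult_left)
qed

lemma sandwich_sum_antipode_reversed: "sandwich_sum a b = mul m (S b) (S a)"
proof -
  have "sandwich_sum a b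
    = lin_ext (\<lambda>(x, a3). lin_ext (\<lambda>(a1, a2). lin_ext (\<lambda>(y, b3). lin_ext (\<lambda>(b1, b2).
        antipode_sandwich a1 a2 a3 b1 b2 b3) (d y)) (d b)) (d x)) (d a)"
    unfolding lin_ext_comult_comult_id case_prod_conv ..
  also have "\<dots> = lin_ext (\<lambda>(x, a3). lin_ext (\<lambda>(y, b3). lin_ext (\<lambda>(a1, a2). lin_ext (\<lambda>(b1, b2).
        antipode_sandwich a1 a2 a3 b1 b2 b3) (d y)) (d x)) (d b)) (d a)"
    by (intro lin_ext_cong) (clarsimp, rule lin_ext_swap_pairs)
  also have "\<dots> = lin_ext (\<lambda>(x, a3). smult (e x)
                    (lin_ext (\<lambda>(y, b3). smult (e y) (mul m (S b3) (S a3))) (d b))) (d a)"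
    unfolding sandwich_contract_left smult_smult[symmetric]
    by (subst lin_ext_linear_map_pair[where L="smult _"]) (intro linear_map_intros, rule refl)
  also have "\<dots> = mul m (S b) (S a)"
    by (simp only: counit_left)
  finally show ?thesis .
qed

lemma sandwich_sum_antipode: "sandwich_sum a b = lin_ext S (m (a, b))"
proof -
  have sandwich_assoc: "antipode_sandwich a1 a2 a3 b1 b2 b3
     = mul m (mul m (mul m (lin_ext S (m (a1, b1))) (bvec a2)) (bvec b2)) (mul m (S b3) (S a3))"
    for a1 a2 a3 b1 b2 b3
    unfolding antipode_sandwich_def mul_bvec[symmetric] mul_assoc ..
  have "sandwich_sum a b
    = lin_ext (\<lambda>(a1, y). lin_ext (\<lambda>(a2, a3). lin_ext (\<lambda>(b1, y'). lin_ext (\<lambda>(b2, b3).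
        antipode_sandwich a1 a2 a3 b1 b2 b3) (d y')) (d b)) (d y)) (d a)"
    unfolding lin_ext_comult_id_comult case_prod_conv ..
  also have "\<dots> = lin_ext (\<lambda>(a1, y). lin_ext (\<lambda>(a2, a3). lin_ext (\<lambda>(b1, y'). smult (e y')
                    (mul m (mul m (lin_ext S (m (a1, b1))) (bvec a2)) (S a3))) (d b)) (d y)) (d a)"
    by (simp only: sandwich_assoc antipode_right_inside)
  also have "\<dots> = lin_ext (\<lambda>(a1, y). lin_ext (\<lambda>(a2, a3).
                    mul m (mul m (lin_ext S (m (a1, b))) (bvec a2)) (S a3)) (d y)) (d a)"
    by (simp only: counit_right)
  also have "\<dots> = lin_ext (\<lambda>(a1, y). smult (e y) (lin_ext S (m (a1, b)))) (d a)"
    using antipode_right_inside[where B=u] by (simp only: mul_unit_right)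
  also have "\<dots> = lin_ext S (m (a, b))"
    by (simp only: counit_right)
  finally show ?thesis .
qed

lemma antipode_m: "lin_ext S (m (a, b)) = mul m (S b) (S a)"
  using sandwich_sum_antipode sandwich_sum_antipode_reversed by simp

lemma antipode_unit: "lin_ext S u = u"
  using antipode_left[of u] by (simp add: comult_unit lin_ext_mul_antipode_tensor counit_unit)

end

section \<open>The counit leg of a universal R-matrix\<close>

definition counit_id :: "('a \<Rightarrow> 'k::field) \<Rightarrow> ('a \<times> 'b \<Rightarrow>\<^sub>0 'k) \<Rightarrow> ('b \<Rightarrow>\<^sub>0 'k)" where
  "counit_id e X = lin_ext (\<lambda>(a, b). smult (e a) (bvec b)) X"

lemma counit_id_tensor: "counit_id e (tensor v w) = smult (lin_form e v) w"
  unfolding counit_id_def lin_ext_tensor by (simp add: lin_ext_fun_smult lin_ext_scalar)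

lemma counit_id_bvec [simp]: "counit_id e (bvec (a, b)) = smult (e a) (bvec b)"
  unfolding counit_id_def by simp

context hopf
begin

lemma counit_id_mul: "counit_id e (mul (tmult m M) X Y) = mul M (counit_id e X) (counit_id e Y)"
proof (rule bilinear_eqI[where P="\<lambda>X Y. counit_id e (mul (tmult m M) X Y)"])
  fix a b :: "'a \<times> 'b"
  show "counit_id e (mul (tmult m M) (bvec a) (bvec b)) = mul M (counit_id e (bvec a)) (counit_id e (bvec b))"
    by (cases a, cases b)
       (simp add: tmult_def counit_id_tensor counit_m mul_smult_left mul_smult_right mult.commute)
qed (unfold counit_id_def, (intro linear_map_intros)+)

lemma tmult_assoc: "mul (tmult m m) (mul (tmult m m) X Y) Z = mul (tmult m m) X (mul (tmult m m) Y Z)"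
proof -
  have bvec_pair: "bvec a = tensor (bvec (fst a)) (bvec (snd a))" for a :: "'a \<times> 'a"
    by simp
  have "mul (tmult m m) (mul (tmult m m) (bvec a) (bvec b)) (bvec c)
          = mul (tmult m m) (bvec a) (mul (tmult m m) (bvec b) (bvec c))" for a b c
    by (subst (1 2 3 4 5 6) bvec_pair) (simp only: tmult_tensor mul_assoc)
  then have "mul (tmult m m) (mul (tmult m m) (bvec a) (bvec b)) Z
               = mul (tmult m m) (bvec a) (mul (tmult m m) (bvec b) Z)" for a b
    by - (rule linear_map_eqI, (intro linear_map_intros)+)
  then have "mul (tmult m m) (mul (tmult m m) (bvec a) Y) Z
               = mul (tmult m m) (bvec a) (mul (tmult m m) Y Z)" for a
    by - (rule linear_map_eqI[where F="\<lambda>Y. mul (tmult m m) (mul (tmult m m) (bvec a) Y) Z"],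
          (intro linear_map_intros)+)
  then show ?thesis
    by - (rule linear_map_eqI[where F="\<lambda>X. mul (tmult m m) (mul (tmult m m) X Y) Z"],
          (intro linear_map_intros)+)
qed

lemma counit_id_reassoc_comult_id: "counit_id e (reassoc (lin_ext (tmap d idmap) R)) = R"
proof -
  have "counit_id e (reassoc (lin_ext (tmap d idmap) R))
          = lin_ext (\<lambda>(x, y). lin_ext (\<lambda>(p, q). smult (e p) (bvec (q, y))) (d x)) R"
    unfolding counit_id_def lin_ext_reassoc lin_ext_lin_ext
    by (intro lin_ext_cong) (auto simp: tmap_def idmap_def lin_ext_tensor_bvec_right split_def)
  also have "\<dots> = lin_ext bvec R"
    by (simp only: counit_left) (simp add: case_prod_beta')
  finally show ?thesis by simp
qed

lemma counit_id_leg13: "counit_id e (leg13 u R) = tensor u (counit_id e R)"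
proof -
  have "counit_id e (leg13 u R) = lin_ext (\<lambda>(a, b). tensor u (smult (e a) (bvec b))) R"
    unfolding leg13_def counit_id_def lin_ext_lin_ext
    by (intro lin_ext_cong) (clarsimp simp: counit_id_tensor[unfolded counit_id_def] tensor_smult_right)
  also have "\<dots> = tensor u (counit_id e R)"
    unfolding counit_id_def by (rule lin_ext_linear_map_pair) (intro linear_map_intros)
  finally show ?thesis .
qed

lemma counit_id_leg23: "counit_id e (leg23 u R) = R"
  unfolding leg23_def counit_id_tensor counit_unit by simp

end

locale hopf_invertible_R = hopf m u d e S for m :: "'a \<times> 'a \<Rightarrow> ('a \<Rightarrow>\<^sub>0 'k::field)" and u d e S +
  fixes R Rinv :: "'a \<times> 'a \<Rightarrow>\<^sub>0 'k"
  assumes R_Rinv: "mul (tmult m m) R Rinv = tensor u u"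
    and Rinv_R: "mul (tmult m m) Rinv R = tensor u u"
    and comult_id_R: "reassoc (lin_ext (tmap d idmap) R) = mul (tmult m (tmult m m)) (leg13 u R) (leg23 u R)"
begin

text \<open>Applying \<open>\<epsilon> \<otimes> id \<otimes> id\<close> to \<open>(\<Delta> \<otimes> id) R = R\<^sub>1\<^sub>3 R\<^sub>2\<^sub>3\<close> gives
  \<open>R = (1 \<otimes> x) R\<close> for \<open>x = (\<epsilon> \<otimes> id) R\<close>; cancelling \<open>R\<close> leaves \<open>1 \<otimes> 1 = 1 \<otimes> x\<close>.\<close>

lemma counit_id_R: "counit_id e R = u"
proof -
  let ?T = "tmult m m" and ?x = "counit_id e R"
  have R_eq: "R = mul ?T (tensor u ?x) R"
    using arg_cong[OF comult_id_R, of "counit_id e"]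
    by (simp only: counit_id_reassoc_comult_id counit_id_mul counit_id_leg13 counit_id_leg23)
  have "tensor u u = mul ?T (mul ?T (tensor u ?x) R) Rinv"
    using R_Rinv R_eq by simp
  also have "\<dots> = tensor u ?x"
    by (simp only: tmult_assoc R_Rinv tmult_tensor mul_unit_left mul_unit_right)
  finally have "counit_id e (tensor u u) = counit_id e (tensor u ?x)"
    by simp
  then show ?thesis by (simp add: counit_id_tensor counit_unit)
qed

lemma counit_id_Rinv: "counit_id e Rinv = u"
  using arg_cong[OF Rinv_R, of "counit_id e"]
  by (simp add: counit_id_mul counit_id_R counit_id_tensor counit_unit)

end

section \<open>The adjoint action pushed to \<open>K\<close> and the twisting operator\<close>

locale hopf_to_algebra = hopf m u d e S for m :: "'a \<times> 'a \<Rightarrow> ('a \<Rightarrow>\<^sub>0 'k::field)" and u d e S +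
  fixes mK :: "'c \<times> 'c \<Rightarrow> ('c \<Rightarrow>\<^sub>0 'k)" and uK :: "'c \<Rightarrow>\<^sub>0 'k" and p :: "'a \<Rightarrow> ('c \<Rightarrow>\<^sub>0 'k)"
  assumes mulK_assoc: "\<And>x y z. mul mK (mul mK x y) z = mul mK x (mul mK y z)"
    and mulK_unit_left [simp]: "\<And>x. mul mK uK x = x"
    and mulK_unit_right [simp]: "\<And>x. mul mK x uK = x"
    and p_mul: "\<And>x y. lin_ext p (mul m x y) = mul mK (lin_ext p x) (lin_ext p y)"
    and p_unit: "lin_ext p u = uK"
begin

definition adK :: "('a \<Rightarrow>\<^sub>0 'k) \<Rightarrow> ('c \<Rightarrow>\<^sub>0 'k) \<Rightarrow> ('c \<Rightarrow>\<^sub>0 'k)" where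
  "adK h k = lin_ext (\<lambda>(h1, h2). mul mK (mul mK (p h1) k) (lin_ext p (S h2))) (lin_ext d h)"

lemma linear_map_adK_left: "linear_map (\<lambda>h. adK h k)"
  unfolding adK_def by (intro linear_map_intros)

lemma linear_map_adK_right: "linear_map (\<lambda>k. adK h k)"
  unfolding adK_def by (rule linear_map_lin_ext_fun_pair) (intro linear_map_intros)

lemma p_m: "lin_ext p (m (a, b)) = mul mK (p a) (p b)"
  using p_mul[of "bvec a" "bvec b"] by simp

lemma adK_summands_tensor:
  "lin_ext (\<lambda>(h1, h2). mul mK (mul mK (p h1) k) (lin_ext p (S h2))) (tensor v w)
     = mul mK (mul mK (lin_ext p v) k) (lin_ext p (lin_ext S w))"
  using lin_ext_tensor_bilinear[where B="\<lambda>v w. mul mK (mul mK (lin_ext p v) k) (lin_ext p (lin_ext S w))"]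
  by (simp add: linear_map_intros)

lemma adK_mul: "adK (mul m g h) k = adK g (adK h k)"
proof -
  let ?summand = "\<lambda>x1 x2 y1 y2. mul mK (p x1) (mul mK (p y1) (mul mK k
                     (mul mK (lin_ext p (S y2)) (lin_ext p (S x2)))))"
  have "adK (mul m g h) k
          = lin_ext (\<lambda>(x1, x2). lin_ext (\<lambda>(y1, y2). ?summand x1 x2 y1 y2) (lin_ext d h)) (lin_ext d g)"
    unfolding adK_def comult_mul lin_ext_mul_tmult adK_summands_tensor
    unfolding antipode_m p_mul p_m mulK_assoc ..
  also have "\<dots> = lin_ext (\<lambda>(x1, x2). mul mK (mul mK (p x1) (adK h k)) (lin_ext p (S x2))) (lin_ext d g)"
  proof (intro lin_ext_cong, clarify)
    fix x1 x2
    have "mul mK (mul mK (p x1) (adK h k)) (lin_ext p (S x2))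
            = lin_ext (\<lambda>(y1, y2). mul mK (mul mK (p x1) (mul mK (mul mK (p y1) k) (lin_ext p (S y2))))
                (lin_ext p (S x2))) (lin_ext d h)"
      unfolding adK_def by (rule lin_ext_linear_map_pair[symmetric]) (intro linear_map_intros)
    then show "lin_ext (\<lambda>(y1, y2). ?summand x1 x2 y1 y2) (lin_ext d h)
                 = mul mK (mul mK (p x1) (adK h k)) (lin_ext p (S x2))"
      by (simp only: mulK_assoc)
  qed
  also have "\<dots> = adK g (adK h k)"
    unfolding adK_def ..
  finally show ?thesis .
qed

lemma adK_unit: "adK u k = k"
  unfolding adK_def comult_unit adK_summands_tensor p_unit antipode_unit by simp

lemma adK_bvec_unitK: "adK (bvec g) uK = smult (e g) uK"
proof -
  have "adK (bvec g) uK = lin_ext (\<lambda>(x, y). lin_ext p (mul m (bvec x) (S y))) (d g)"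
    unfolding adK_def by (simp add: p_mul)
  also have "\<dots> = lin_ext p (lin_ext (\<lambda>(x, y). mul m (bvec x) (S y)) (d g))"
    by (rule lin_ext_linear_map_pair) simp
  finally show ?thesis by (simp add: antipode_right_basis lin_ext_smult p_unit)
qed

lemma p_ad: "lin_ext p (ad m d S h a) = adK h (lin_ext p a)"
proof -
  have "lin_ext p (ad m d S h a)
          = lin_ext (\<lambda>(x, y). lin_ext p (mul m (mul m (bvec x) a) (S y))) (lin_ext d h)"
    unfolding ad_def by (simp add: lin_ext_linear_map_pair[where L="lin_ext p"])
  then show ?thesis unfolding adK_def by (simp add: p_mul)
qed

definition twist :: "('a \<times> 'a \<Rightarrow>\<^sub>0 'k) \<Rightarrow> ('a \<times> 'c \<Rightarrow>\<^sub>0 'k) \<Rightarrow> ('a \<times> 'c \<Rightarrow>\<^sub>0 'k)" where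
  "twist Q Z = lin_ext (\<lambda>(q1, q2).
     lin_ext (\<lambda>(x, c). tensor (mul m (bvec x) (S q2)) (adK (bvec q1) (bvec c))) Z) Q"

lemma linear_map_twist: "linear_map (twist Q)"
  unfolding twist_def by (rule linear_map_lin_ext_fun_pair) simp

lemma twist_summand_tensor_right:
  "lin_ext (\<lambda>(x, c). tensor (mul m (bvec x) (S q2)) (adK (bvec q1) (bvec c))) (tensor v w)
     = tensor (mul m v (S q2)) (adK (bvec q1) w)"
  by (rule lin_ext_tensor_bilinear[where B="\<lambda>v w. tensor (mul m v (S q2)) (adK (bvec q1) w)"])
     (intro linear_map_intros linear_map_adK_right)+

lemma twist_tensor:
  "twist Q (tensor v w) = lin_ext (\<lambda>(q1, q2). tensor (mul m v (S q2)) (adK (bvec q1) w)) Q"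
  unfolding twist_def twist_summand_tensor_right ..

lemma twist_tensor_unitK:
  assumes "counit_id e Q = u"
  shows "twist Q (tensor a uK) = tensor a uK"
proof -
  have "twist Q (tensor a uK) = lin_ext (\<lambda>(q1, q2). tensor (mul m a (lin_ext S (smult (e q1) (bvec q2)))) uK) Q"
    unfolding twist_tensor adK_bvec_unitK
    by (simp add: lin_ext_smult mul_smult_right tensor_smult_right tensor_smult_left)
  also have "\<dots> = tensor (mul m a (lin_ext S (counit_id e Q))) uK"
    unfolding counit_id_def by (rule lin_ext_linear_map_pair) (intro linear_map_intros)
  finally show ?thesis by (simp add: assms antipode_unit)
qed

lemma twist_summand_tensor_left:
  "lin_ext (\<lambda>(q1, q2). tensor (mul m (bvec x) (S q2)) (adK (bvec q1) (bvec c))) (tensor v w)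
     = tensor (mul m (bvec x) (lin_ext S w)) (adK v (bvec c))"
  using lin_ext_tensor_bilinear[where B="\<lambda>v w. tensor (mul m (bvec x) (lin_ext S w)) (adK v (bvec c))"]
  by (simp add: linear_map_intros linear_map_adK_left)

text \<open>In fact \<open>twist P \<circ> twist Q = twist (PQ)\<close>: in the left leg, right multiplication
  by \<open>S(Q\<^sup>i)\<close> and then by \<open>S(P\<^sup>j)\<close> is right multiplication by \<open>S(P\<^sup>j Q\<^sup>i)\<close>.\<close>

lemma twist_twist:
  assumes "mul (tmult m m) P Q = tensor u u"
  shows "twist P (twist Q Z) = Z"
proof (rule linear_map_eqI[where F="\<lambda>Z. twist P (twist Q Z)" and G="\<lambda>Z. Z"])
  show "linear_map (\<lambda>Z. twist P (twist Q Z))"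
    by (rule linear_map_comp[OF linear_map_twist linear_map_twist])
  fix z :: "'a \<times> 'c"
  obtain x c where z: "z = (x, c)" by (cases z)
  let ?summand = "\<lambda>q1 q2 p1 p2.
        tensor (mul m (bvec x) (mul m (S q2) (S p2))) (adK (bvec p1) (adK (bvec q1) (bvec c)))"
  have "twist P (twist Q (bvec z))
          = lin_ext (\<lambda>(q1, q2). twist P (tensor (mul m (bvec x) (S q2)) (adK (bvec q1) (bvec c)))) Q"
    unfolding z twist_def[of Q]
    by (simp add: lin_ext_linear_map_pair[OF linear_map_twist])
  also have "\<dots> = lin_ext (\<lambda>(q1, q2). lin_ext (\<lambda>(p1, p2). ?summand q1 q2 p1 p2) P) Q"
    unfolding twist_tensor mul_assoc ..
  also have "\<dots> = lin_ext (\<lambda>(p1, p2). lin_ext (\<lambda>(q1, q2). ?summand q1 q2 p1 p2) Q) P"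
    by (rule lin_ext_swap_pairs)
  also have "\<dots> = lin_ext (\<lambda>(q1, q2). tensor (mul m (bvec x) (S q2)) (adK (bvec q1) (bvec c)))
                    (mul (tmult m m) P Q)"
    unfolding lin_ext_mul_tmult twist_summand_tensor_left antipode_m adK_mul[of "bvec _" "bvec _", simplified] ..
  also have "\<dots> = bvec z"
    unfolding assms twist_summand_tensor_left z by (simp add: antipode_unit adK_unit)
  finally show "twist P (twist Q (bvec z)) = bvec z" .
qed (rule linear_map_id)

lemma transmuted_comult_eq_twist:
  "lin_ext (tmap idmap p) (transmuted_comult m d S R h) = twist R (lin_ext (tmap idmap p) (lin_ext d h))"
proof -
  have "lin_ext (tmap idmap p) (transmuted_comult m d S R h)
          = lin_ext (\<lambda>(q1, q2). lin_ext (\<lambda>(x, y).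
              tensor (mul m (bvec x) (S q2)) (adK (bvec q1) (p y))) (lin_ext d h)) R"
    unfolding transmuted_comult_def lin_ext_lin_ext
    by (intro lin_ext_cong) (clarsimp simp: lin_ext_lin_ext tmap_tensor p_ad intro!: lin_ext_cong)
  also have "\<dots> = twist R (lin_ext (tmap idmap p) (lin_ext d h))"
    unfolding twist_def lin_ext_lin_ext
    by (intro lin_ext_cong)
       (clarsimp simp: lin_ext_lin_ext tmap_def idmap_def twist_summand_tensor_right intro!: lin_ext_cong)
  finally show ?thesis .
qed

end

theorem mainTheorem2:
  fixes m :: "'a \<times> 'a \<Rightarrow> ('a \<Rightarrow>\<^sub>0 'k::field)" and u :: "'a \<Rightarrow>\<^sub>0 'k"
    and d :: "'a \<Rightarrow> ('a \<times> 'a \<Rightarrow>\<^sub>0 'k)" and e :: "'a \<Rightarrow> 'k" and S :: "'a \<Rightarrow> ('a \<Rightarrow>\<^sub>0 'k)"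
    and R :: "'a \<times> 'a \<Rightarrow>\<^sub>0 'k"
    and mK :: "'c \<times> 'c \<Rightarrow> ('c \<Rightarrow>\<^sub>0 'k)" and uK :: "'c \<Rightarrow>\<^sub>0 'k"
    and dK :: "'c \<Rightarrow> ('c \<times> 'c \<Rightarrow>\<^sub>0 'k)" and eK :: "'c \<Rightarrow> 'k" and SK :: "'c \<Rightarrow> ('c \<Rightarrow>\<^sub>0 'k)"
    and p :: "'a \<Rightarrow> ('c \<Rightarrow>\<^sub>0 'k)"
  assumes "quasitriangular m u d e S R"
    and "hopf_algebra mK uK dK eK SK"
    and "hopf_map m u d e mK uK dK eK p"
    and "\<forall>y. \<exists>x. lin_ext p x = y"
  shows "{h. lin_ext (tmap idmap p) (transmuted_comult m d S R h) = tensor h uK}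
       = {h. lin_ext (tmap idmap p) (lin_ext d h) = tensor h uK}"
proof -
  obtain Rinv where "hopf_invertible_R m u d e S R Rinv"
    using assms(1) unfolding quasitriangular_def hopf_invertible_R_def hopf_invertible_R_axioms_def hopf_def
    by blast
  then interpret hopf_invertible_R m u d e S R Rinv .
  interpret hopf_to_algebra m u d e S mK uK p
    using assms(2,3) unfolding hopf_to_algebra_axioms_def hopf_algebra_def hopf_map_def
    by unfold_locales blast+
  have "lin_ext (tmap idmap p) (transmuted_comult m d S R h) = tensor h uK
          \<longleftrightarrow> lin_ext (tmap idmap p) (lin_ext d h) = tensor h uK" for h
    using twist_twist[OF Rinv_R, of "lin_ext (tmap idmap p) (lin_ext d h)"]
      twist_tensor_unitK[OF counit_id_R] twist_tensor_unitK[OF counit_id_Rinv]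
    by (auto simp: transmuted_comult_eq_twist)
  then show ?thesis by blast
qed

end
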